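(* Let $\mathcal{B}=\langle V,F,E\rangle$ be a self-contained finite bipartite graph and let $\mathcal{S}_F$ be the set of minimal self-contained sets in $\mathcal{B}$. Then the sets in $\mathcal{S}_F$ are pairwise disjoint, and the sets in $\mathcal{S}_V=\{\mathrm{adj}_{\mathcal{B}}(S):S\in\mathcal{S}_F\}$ are pairwise disjoint.
   Context: $\mathcal{B}=\langle V,F,E\rangle$ is bipartite with variable vertices $V$ and constraint vertices $F$; $\mathrm{adj}_{\mathcal{B}}(X)$ is the set of vertices adjacent to some vertex of $X$. A set $F'\subseteq F$ is self-contained if $|F'|=|\mathrm{adj}_{\mathcal{B}}(F')|$ and $|F''|\le|\mathrm{adj}_{\mathcal{B}}(F'')|$ for all $F''\subseteq F'$. $\mathcal{B}$ is self-contained if $|F|=|V|$ and $F$ is self-contained. A non-empty self-contained set is minimal self-contained if none of its non-empty strict subsets is self-contained. *)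

theory Defs
  imports Main
begin

definition bipartite :: "'v set \<Rightarrow> 'f set \<Rightarrow> ('v \<times> 'f) set \<Rightarrow> bool" where
  "bipartite V F E \<longleftrightarrow> E \<subseteq> V \<times> F"

definition adjF :: "'v set \<Rightarrow> ('v \<times> 'f) set \<Rightarrow> 'f set \<Rightarrow> 'v set" where
  "adjF V E X = {v \<in> V. \<exists>f\<in>X. (v, f) \<in> E}"

definition self_contained_set :: "'v set \<Rightarrow> 'f set \<Rightarrow> ('v \<times> 'f) set \<Rightarrow> 'f set \<Rightarrow> bool" where
  "self_contained_set V F E F' \<longleftrightarrow>
     F' \<subseteq> F \<and> card F' = card (adjF V E F') \<and>
     (\<forall>F''. F'' \<subseteq> F' \<longrightarrow> card F'' \<le> card (adjF V E F''))"

definition self_contained_graph :: "'v set \<Rightarrow> 'f set \<Rightarrow> ('v \<times> 'f) set \<Rightarrow> bool" where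
  "self_contained_graph V F E \<longleftrightarrow> card F = card V \<and> self_contained_set V F E F"

definition minimal_self_contained :: "'v set \<Rightarrow> 'f set \<Rightarrow> ('v \<times> 'f) set \<Rightarrow> 'f set \<Rightarrow> bool" where
  "minimal_self_contained V F E S \<longleftrightarrow>
     S \<noteq> {} \<and> self_contained_set V F E S \<and>
     (\<forall>S'. S' \<noteq> {} \<and> S' \<subset> S \<longrightarrow> \<not> self_contained_set V F E S')"

end

theory Submission
  imports Defs
begin

text \<open>Call X \<subseteq> F tight if card X = card (adjF V E X). Under Hall's condition on F, the map
  X \<mapsto> card (adjF V E X) - card X is nonnegative and submodular, so the intersection of two
  tight sets is tight and its neighbourhood is the intersection of their neighbourhoods.
  Hence two distinct minimal self-contained sets meet in a self-contained set strictly smaller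
  than one of them, which must be empty; their neighbourhoods are then disjoint as well.\<close>

lemma adjF_empty [simp]: "adjF V E {} = {}"
  unfolding adjF_def by auto

lemma adjF_Un: "adjF V E (A \<union> B) = adjF V E A \<union> adjF V E B"
  unfolding adjF_def by auto

lemma adjF_Int_subset: "adjF V E (A \<inter> B) \<subseteq> adjF V E A \<inter> adjF V E B"
  unfolding adjF_def by auto

lemma finite_adjF: "finite V \<Longrightarrow> finite (adjF V E X)"
  unfolding adjF_def by auto

lemma tight_Int:
  assumes "finite V" and "finite F"
    and hall: "\<forall>X\<subseteq>F. card X \<le> card (adjF V E X)"
    and "A \<subseteq> F" and tight_A: "card A = card (adjF V E A)"
    and "B \<subseteq> F" and tight_B: "card B = card (adjF V E B)"
  shows "card (A \<inter> B) = card (adjF V E (A \<inter> B))"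
    and "adjF V E (A \<inter> B) = adjF V E A \<inter> adjF V E B"
proof -
  have fin: "finite A" "finite B" "finite (adjF V E A)" "finite (adjF V E B)"
    using assms(1,2,4,6) finite_subset finite_adjF by blast+
  have sets: "card (A \<union> B) + card (A \<inter> B) = card A + card B"
    using card_Un_Int[OF fin(1,2)] by simp
  have nbhds: "card (adjF V E A \<union> adjF V E B) + card (adjF V E A \<inter> adjF V E B)
      = card (adjF V E A) + card (adjF V E B)"
    using card_Un_Int[OF fin(3,4)] by simp
  have hall_Un: "card (A \<union> B) \<le> card (adjF V E A \<union> adjF V E B)"
    using hall[rule_format, of "A \<union> B"] assms(4,6) by (simp add: adjF_Un)
  have hall_Int: "card (A \<inter> B) \<le> card (adjF V E (A \<inter> B))"
    using hall assms(4) by blast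
  have mono_Int: "card (adjF V E (A \<inter> B)) \<le> card (adjF V E A \<inter> adjF V E B)"
    using fin(3) by (intro card_mono adjF_Int_subset) blast
  show "card (A \<inter> B) = card (adjF V E (A \<inter> B))"
    using sets nbhds hall_Un hall_Int mono_Int tight_A tight_B by linarith
  have "finite (adjF V E A \<inter> adjF V E B)"
    using fin(3) by simp
  moreover have "card (adjF V E (A \<inter> B)) = card (adjF V E A \<inter> adjF V E B)"
    using sets nbhds hall_Un hall_Int mono_Int tight_A tight_B by linarith
  ultimately show "adjF V E (A \<inter> B) = adjF V E A \<inter> adjF V E B"
    by (rule card_subset_eq[OF _ adjF_Int_subset])
qed

lemma self_contained_set_Int:
  assumes "finite V" and "finite F"
    and hall: "\<forall>X\<subseteq>F. card X \<le> card (adjF V E X)"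
    and A: "self_contained_set V F E A" and B: "self_contained_set V F E B"
  shows "self_contained_set V F E (A \<inter> B)"
    and "adjF V E (A \<inter> B) = adjF V E A \<inter> adjF V E B"
proof -
  have "A \<subseteq> F" "card A = card (adjF V E A)" "B \<subseteq> F" "card B = card (adjF V E B)"
    using A B unfolding self_contained_set_def by blast+
  note tight = tight_Int[OF assms(1,2) hall this]
  show "adjF V E (A \<inter> B) = adjF V E A \<inter> adjF V E B"
    by (fact tight(2))
  show "self_contained_set V F E (A \<inter> B)"
    using A tight(1) unfolding self_contained_set_def by blast
qed

lemma minimal_self_contained_subset:
  assumes "minimal_self_contained V F E S"
    and "self_contained_set V F E S'" and "S' \<subseteq> S"
  shows "S' = {} \<or> S' = S"
  using assms unfolding minimal_self_contained_def by blast

lemma minimal_self_contained_disjoint: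
  assumes "finite V" and "finite F"
    and hall: "\<forall>X\<subseteq>F. card X \<le> card (adjF V E X)"
    and S: "minimal_self_contained V F E S" and T: "minimal_self_contained V F E T"
    and "S \<noteq> T"
  shows "S \<inter> T = {}" and "adjF V E S \<inter> adjF V E T = {}"
proof -
  have "self_contained_set V F E S" "self_contained_set V F E T"
    using S T unfolding minimal_self_contained_def by blast+
  note Int = self_contained_set_Int[OF assms(1,2) hall this]
  have "S \<inter> T = {} \<or> S \<inter> T = S" "S \<inter> T = {} \<or> S \<inter> T = T"
    using minimal_self_contained_subset[OF S Int(1)] minimal_self_contained_subset[OF T Int(1)]
    by blast+
  with \<open>S \<noteq> T\<close> show "S \<inter> T = {}"
    by blast
  with Int(2) show "adjF V E S \<inter> adjF V E T = {}"
    by simp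
qed

theorem lemma32:
  fixes V :: "'v set" and F :: "'f set" and E :: "('v \<times> 'f) set"
  assumes "finite V" and "finite F"
    and "bipartite V F E"
    and "self_contained_graph V F E"
  defines "SF \<equiv> {S. minimal_self_contained V F E S}"
  shows "pairwise disjnt SF \<and> pairwise disjnt (adjF V E ` SF)"
proof -
  have hall: "\<forall>X\<subseteq>F. card X \<le> card (adjF V E X)"
    using assms(4) unfolding self_contained_graph_def self_contained_set_def by blast
  note disjoint = minimal_self_contained_disjoint[OF assms(1,2) hall]
  have "pairwise disjnt SF"
    using disjoint(1) unfolding SF_def pairwise_def disjnt_def by blast
  moreover have "pairwise disjnt (adjF V E ` SF)"
    using disjoint(2) unfolding SF_def pairwise_image by (auto simp: pairwise_def disjnt_def)
  ultimately show ?thesis ..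
qed

end
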